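(* Let $\mathcal{R}$ be a ring and let $(\mathcal{C}^{\bullet},\partial)$ be a bigraded cochain complex of $\mathcal{R}$-modules as described in the context. Then there are three commutative diagrams with exact rows and exact columns. The first has rows \[ 0\to B^{3}(\mathcal{C},\partial)\cap\mathcal{C}^{3,0}\hookrightarrow B^{3}(\mathcal{C},\partial)\xrightarrow{\pi_{1}}\mathcal{B}^{3}_{1}\to0,\quad 0\to Z^{3}(\mathcal{N}_{0},\overline{\partial})\hookrightarrow Z^{3}(\mathcal{C},\partial)\xrightarrow{\pi_{1}}\ker(\rho_{3})\to0, \] \[ 0\to\frac{Z^{3}(\mathcal{N}_{0},\overline{\partial})}{B^{3}(\mathcal{C},\partial)\cap\mathcal{C}^{3,0}}\to H^{3}(\mathcal{C},\partial)\to\frac{\ker(\rho_{3})}{\mathcal{B}^{3}_{1}}\to0; \] the second has rows \[ 0\to\mathcal{B}^{3}_{1}\cap\mathcal{C}^{2,1}\hookrightarrow\mathcal{B}^{3}_{1}\xrightarrow{\pi_{2}}\mathcal{B}^{3}_{2}\to0,\quad 0\to\ker(\varrho_{3})\hookrightarrow\ker(\rho_{3})\xrightarrow{\pi_{2}}\mathcal{Z}^{3}_{2}\to0, \] \[ 0\to\frac{\ker(\varrho_{3})}{\mathcal{B}^{3}_{1}\cap\mathcal{C}^{2,1}}\to\frac{\ker(\rho_{3})}{\mathcal{B}^{3}_{1}}\to\frac{\mathcal{Z}^{3}_{2}}{\mathcal{B}^{3}_{2}}\to0; \] and the third has rows \[ 0\to\mathcal{B}^{3}_{2}\cap\mathcal{C}^{1,2}\hookrightarrow\mathcal{B}^{3}_{2}\xrightarrow{\pi_{3}}B^{3}(\mathcal{C}^{0,\bullet},\partial_{0,1})\to0,\quad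 0\to\mathcal{Z}^{3}_{2}\cap\mathcal{C}^{1,2}\hookrightarrow\mathcal{Z}^{3}_{2}\xrightarrow{\pi_{3}}\mathcal{Z}^{3}_{3}\to0, \] \[ 0\to\frac{\mathcal{Z}^{3}_{2}\cap\mathcal{C}^{1,2}}{\mathcal{B}^{3}_{2}\cap\mathcal{C}^{1,2}}\to\frac{\mathcal{Z}^{3}_{2}}{\mathcal{B}^{3}_{2}}\to\frac{\mathcal{Z}^{3}_{3}}{B^{3}(\mathcal{C}^{0,\bullet},\partial_{0,1})}\to0. \] In each diagram the first two rows are listed first (top row, then middle row), the vertical maps from the top to the middle row are inclusions, those from the middle to the bottom row are the canonical quotient projections, and the maps of the bottom row are induced by those of the middle row.
   Context: Setting: $\mathcal{C}^{\bullet}=\bigoplus_{k}\mathcal{C}^{k}$ is a graded $\mathcal{R}$-module with compatible bigrading $\mathcal{C}^{k}=\bigoplus_{p+q=k}\mathcal{C}^{p,q}$, $\mathcal{C}^{p,q}=\{0\}$ if $p<0$ or $q<0$; $\partial$ is $\mathcal{R}$-linear of degree $1$, $\partial^{2}=0$, and $\partial=\partial_{2,-1}+\partial_{1,0}+\partial_{0,1}$ with $\partial_{i,j}(\mathcal{C}^{p,q})\subseteq\mathcal{C}^{p+i,q+j}$. For $\eta\in\mathcal{C}^{k}$, $\eta_{p,q}$ is its $\mathcal{C}^{p,q}$-component. $G^{q}\mathcal{C}:=\bigoplus_{j\geq q}\mathcal{C}^{i,j}$ and $\pi_{q}:\mathcal{C}\to G^{q}\mathcal{C}$ is the projection along the bigrading.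 $Z,B,H$ denote cocycles, coboundaries, cohomology; $(\mathcal{C}^{0,\bullet},\partial_{0,1})$ is a cochain complex. Let $\mathcal{N}^{p,q}:=\ker(\partial_{0,1}|_{\mathcal{C}^{p,q}})\cap\ker(\partial_{2,-1}|_{\mathcal{C}^{p,q}})$ and, for $q\ge0$, $\mathcal{N}_{q}:=\bigoplus_{p}\mathcal{N}^{p-q,q}$ (degree-$m$ part $\mathcal{N}^{m-q,q}$); each $\mathcal{N}_{q}$ is a subcomplex of $(\mathcal{C},\partial)$, with differential $\overline{\partial}:=\partial|_{\mathcal{N}_q}=\partial_{1,0}|_{\mathcal{N}_q}$. Let $\mathcal{M}^{k}:=\{\eta\in\mathcal{C}^{k}\mid(\partial\eta)_{i,j}\in B^{k+1}(\mathcal{N}_{j},\overline{\partial})\ \text{for all } i+j=k+1\}$, $\mathcal{Z}^{k}_{q}:=\{\pi_{q}(\eta)\mid\eta\in\mathcal{M}^{k},\ \pi_{q}(\partial\eta)=0\}$ and $\mathcal{B}^{k}_{q}:=\pi_{q}(B^{k}(\mathcal{C},\partial))$. Let $\mathcal{A}^{k}:=\{\pi_{1}(\eta)\mid\eta\in\mathcal{C}^{k},\ \pi_{1}(\partial\eta)=0\}$ and $\mathcal{J}^{k}:=\mathcal{A}^{k}\cap\mathcal{C}^{k-1,1}$. For $\xi\in\mathcal{A}^{k}$ and any $\eta\in\mathcal{C}^{k}$ with $\pi_{1}\eta=\xi$, $\pi_{1}(\partial\eta)=0$, the element $\partial_{2,-1}\xi_{k-1,1}+\partial_{1,0}\eta_{k,0}$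 is a $(k+1)$-cocycle of $(\mathcal{N}_{0},\overline{\partial})$ whose class depends only on $\xi$; this defines the linear map $\rho_{k}:\mathcal{A}^{k}\to H^{k+1}(\mathcal{N}_{0},\overline{\partial})$, $\rho_{k}(\xi):=[\partial_{2,-1}\xi_{k-1,1}+\partial_{1,0}\eta_{k,0}]$, and $\varrho_{k}:=\rho_{k}|_{\mathcal{J}^{k}}$. *)

theory Defs
  imports Main "HOL-Library.Function_Algebras"
begin

text \<open>An element of the total module is
  represented as a family eta with eta p q in C^{p,q} (a subgroup of an ambient
  abelian group 'm); the differential is given by its three components
  d21 p q : C^{p,q} -> C^{p+2,q-1} (used only for q >= 1),
  d10 p q : C^{p,q} -> C^{p+1,q},  d01 p q : C^{p,q} -> C^{p,q+1}.\<close>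

record 'm bgcx =
  Cc  :: "nat \<Rightarrow> nat \<Rightarrow> 'm set"
  d21 :: "nat \<Rightarrow> nat \<Rightarrow> 'm \<Rightarrow> 'm"
  d10 :: "nat \<Rightarrow> nat \<Rightarrow> 'm \<Rightarrow> 'm"
  d01 :: "nat \<Rightarrow> nat \<Rightarrow> 'm \<Rightarrow> 'm"

type_synonym 'm bgel = "nat \<Rightarrow> nat \<Rightarrow> 'm"

definition deg :: "('m::zero) bgcx \<Rightarrow> nat \<Rightarrow> 'm bgel set" where
  "deg X k = {\<eta>. (\<forall>p q. \<eta> p q \<in> Cc X p q) \<and> (\<forall>p q. p + q \<noteq> k \<longrightarrow> \<eta> p q = 0)}"

definition bideg :: "('m::zero) bgcx \<Rightarrow> nat \<Rightarrow> nat \<Rightarrow> 'm bgel set" where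
  "bideg X p q = {\<eta> \<in> deg X (p + q). \<forall>p' q'. (p', q') \<noteq> (p, q) \<longrightarrow> \<eta> p' q' = 0}"

definition D21 :: "('m::zero) bgcx \<Rightarrow> 'm bgel \<Rightarrow> 'm bgel" where
  "D21 X \<eta> = (\<lambda>p q. if 2 \<le> p then d21 X (p - 2) (q + 1) (\<eta> (p - 2) (q + 1)) else 0)"

definition D10 :: "('m::zero) bgcx \<Rightarrow> 'm bgel \<Rightarrow> 'm bgel" where
  "D10 X \<eta> = (\<lambda>p q. if 1 \<le> p then d10 X (p - 1) q (\<eta> (p - 1) q) else 0)"

definition D01 :: "('m::zero) bgcx \<Rightarrow> 'm bgel \<Rightarrow> 'm bgel" where
  "D01 X \<eta> = (\<lambda>p q. if 1 \<le> q then d01 X p (q - 1) (\<eta> p (q - 1)) else 0)"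

definition dd :: "('m::ab_group_add) bgcx \<Rightarrow> 'm bgel \<Rightarrow> 'm bgel" where
  "dd X \<eta> = D21 X \<eta> + D10 X \<eta> + D01 X \<eta>"

definition smv :: "('r \<Rightarrow> 'm \<Rightarrow> 'm) \<Rightarrow> 'r \<Rightarrow> 'm bgel \<Rightarrow> 'm bgel" where
  "smv sm r \<eta> = (\<lambda>p q. sm r (\<eta> p q))"

definition bigraded_complex ::
  "('r::ring_1 \<Rightarrow> 'm::ab_group_add \<Rightarrow> 'm) \<Rightarrow> 'm bgcx \<Rightarrow> bool" where
  "bigraded_complex sm X \<longleftrightarrow>
     (\<forall>p q. 0 \<in> Cc X p q
        \<and> (\<forall>x\<in>Cc X p q. \<forall>y\<in>Cc X p q. x + y \<in> Cc X p q)
        \<and> (\<forall>x\<in>Cc X p q. - x \<in> Cc X p q)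
        \<and> (\<forall>r. \<forall>x\<in>Cc X p q. sm r x \<in> Cc X p q)
        \<and> (\<forall>r. \<forall>x\<in>Cc X p q. \<forall>y\<in>Cc X p q. sm r (x + y) = sm r x + sm r y)
        \<and> (\<forall>r s. \<forall>x\<in>Cc X p q. sm (r + s) x = sm r x + sm s x)
        \<and> (\<forall>r s. \<forall>x\<in>Cc X p q. sm (r * s) x = sm r (sm s x))
        \<and> (\<forall>x\<in>Cc X p q. sm 1 x = x))
   \<and> (\<forall>p q. (\<forall>x\<in>Cc X p (Suc q). d21 X p (Suc q) x \<in> Cc X (p + 2) q)
        \<and> (\<forall>x\<in>Cc X p (Suc q). \<forall>y\<in>Cc X p (Suc q).
              d21 X p (Suc q) (x + y) = d21 X p (Suc q) x + d21 X p (Suc q) y)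
        \<and> (\<forall>r. \<forall>x\<in>Cc X p (Suc q). d21 X p (Suc q) (sm r x) = sm r (d21 X p (Suc q) x)))
   \<and> (\<forall>p q. (\<forall>x\<in>Cc X p q. d10 X p q x \<in> Cc X (p + 1) q)
        \<and> (\<forall>x\<in>Cc X p q. \<forall>y\<in>Cc X p q. d10 X p q (x + y) = d10 X p q x + d10 X p q y)
        \<and> (\<forall>r. \<forall>x\<in>Cc X p q. d10 X p q (sm r x) = sm r (d10 X p q x)))
   \<and> (\<forall>p q. (\<forall>x\<in>Cc X p q. d01 X p q x \<in> Cc X p (q + 1))
        \<and> (\<forall>x\<in>Cc X p q. \<forall>y\<in>Cc X p q. d01 X p q (x + y) = d01 X p q x + d01 X p q y)
        \<and> (\<forall>r. \<forall>x\<in>Cc X p q. d01 X p q (sm r x) = sm r (d01 X p q x)))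
   \<and> (\<forall>k. \<forall>\<eta>\<in>deg X k. dd X (dd X \<eta>) = 0)"

definition cocycles :: "('m::ab_group_add) bgcx \<Rightarrow> nat \<Rightarrow> 'm bgel set" where
  "cocycles X k = {\<eta> \<in> deg X k. dd X \<eta> = 0}"

definition coboundaries :: "('m::ab_group_add) bgcx \<Rightarrow> nat \<Rightarrow> 'm bgel set" where
  "coboundaries X k = {dd X \<eta> |\<eta> j. Suc j = k \<and> \<eta> \<in> deg X j}"

definition Nbi :: "('m::zero) bgcx \<Rightarrow> nat \<Rightarrow> nat \<Rightarrow> 'm bgel set" where
  "Nbi X p q = {\<eta> \<in> bideg X p q. D01 X \<eta> = 0 \<and> D21 X \<eta> = 0}"

definition Ndeg :: "('m::zero) bgcx \<Rightarrow> nat \<Rightarrow> nat \<Rightarrow> 'm bgel set" where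
  "Ndeg X q m = (if q \<le> m then Nbi X (m - q) q else {0})"

definition ZN :: "('m::ab_group_add) bgcx \<Rightarrow> nat \<Rightarrow> nat \<Rightarrow> 'm bgel set" where
  "ZN X q k = {\<eta> \<in> Ndeg X q k. dd X \<eta> = 0}"

definition BN :: "('m::ab_group_add) bgcx \<Rightarrow> nat \<Rightarrow> nat \<Rightarrow> 'm bgel set" where
  "BN X q k = {dd X \<eta> |\<eta> j. Suc j = k \<and> \<eta> \<in> Ndeg X q j}"

definition comp :: "('m::zero) bgel \<Rightarrow> nat \<Rightarrow> nat \<Rightarrow> 'm bgel" where
  "comp \<eta> i j = (\<lambda>p q. if p = i \<and> q = j then \<eta> i j else 0)"

definition proj :: "nat \<Rightarrow> ('m::zero) bgel \<Rightarrow> 'm bgel" where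
  "proj q \<eta> = (\<lambda>p q'. if q \<le> q' then \<eta> p q' else 0)"

definition Mset :: "('m::ab_group_add) bgcx \<Rightarrow> nat \<Rightarrow> 'm bgel set" where
  "Mset X k = {\<eta> \<in> deg X k. \<forall>i j. i + j = Suc k \<longrightarrow> comp (dd X \<eta>) i j \<in> BN X j (Suc k)}"

definition Zcal :: "('m::ab_group_add) bgcx \<Rightarrow> nat \<Rightarrow> nat \<Rightarrow> 'm bgel set" where
  "Zcal X k q = {proj q \<eta> |\<eta>. \<eta> \<in> Mset X k \<and> proj q (dd X \<eta>) = 0}"

definition Bcal :: "('m::ab_group_add) bgcx \<Rightarrow> nat \<Rightarrow> nat \<Rightarrow> 'm bgel set" where
  "Bcal X k q = proj q ` coboundaries X k"

definition Aset :: "('m::ab_group_add) bgcx \<Rightarrow> nat \<Rightarrow> 'm bgel set" where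
  "Aset X k = {proj 1 \<eta> |\<eta>. \<eta> \<in> deg X k \<and> proj 1 (dd X \<eta>) = 0}"

definition Jset :: "('m::ab_group_add) bgcx \<Rightarrow> nat \<Rightarrow> 'm bgel set" where
  "Jset X k = Aset X k \<inter> bideg X (k - 1) 1"

text \<open>Cosets and quotients; an element of S/T is the coset x + T, the zero of S/T is T.\<close>
definition coset :: "'a::plus \<Rightarrow> 'a set \<Rightarrow> 'a set" where
  "coset x T = (\<lambda>t. x + t) ` T"

definition quot :: "'a::plus set \<Rightarrow> 'a set \<Rightarrow> 'a set set" where
  "quot S T = (\<lambda>x. coset x T) ` S"

text \<open>\<rho>_k: the class in H^{k+1}(N_0) = Z^{k+1}(N_0)/B^{k+1}(N_0) of
  \<partial>_{2,-1} xi_{k-1,1} + \<partial>_{1,0} eta_{k,0} for a chosen lift eta of xi.\<close>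
definition rho_rep :: "('m::ab_group_add) bgcx \<Rightarrow> nat \<Rightarrow> 'm bgel \<Rightarrow> 'm bgel" where
  "rho_rep X k \<xi> =
     (let \<eta> = (SOME \<eta>. \<eta> \<in> deg X k \<and> proj 1 \<eta> = \<xi> \<and> proj 1 (dd X \<eta>) = 0)
      in D21 X (comp \<xi> (k - 1) 1) + D10 X (comp \<eta> k 0))"

definition rho :: "('m::ab_group_add) bgcx \<Rightarrow> nat \<Rightarrow> 'm bgel \<Rightarrow> 'm bgel set" where
  "rho X k \<xi> = coset (rho_rep X k \<xi>) (BN X 0 (Suc k))"

definition ker_rho :: "('m::ab_group_add) bgcx \<Rightarrow> nat \<Rightarrow> 'm bgel set" where
  "ker_rho X k = {\<xi> \<in> Aset X k. rho X k \<xi> = BN X 0 (Suc k)}"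

definition ker_varrho :: "('m::ab_group_add) bgcx \<Rightarrow> nat \<Rightarrow> 'm bgel set" where
  "ker_varrho X k = {\<xi> \<in> Jset X k. rho X k \<xi> = BN X 0 (Suc k)}"

text \<open>B^k(C^{0,\<bullet>}, \<partial>_{0,1}) (for k \<ge> 1), inside the total module.\<close>
definition B0col :: "('m::ab_group_add) bgcx \<Rightarrow> nat \<Rightarrow> 'm bgel set" where
  "B0col X k = {D01 X \<eta> |\<eta>. \<eta> \<in> bideg X 0 (k - 1)}"

definition is_submod :: "('r \<Rightarrow> 'm \<Rightarrow> 'm) \<Rightarrow> ('m::ab_group_add) bgel set \<Rightarrow> bool" where
  "is_submod sm S \<longleftrightarrow> 0 \<in> S \<and> (\<forall>x\<in>S. \<forall>y\<in>S. x + y \<in> S) \<and> (\<forall>x\<in>S. - x \<in> S)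
     \<and> (\<forall>r. \<forall>x\<in>S. smv sm r x \<in> S)"

definition linmap :: "('r \<Rightarrow> 'm \<Rightarrow> 'm) \<Rightarrow> ('m::ab_group_add bgel \<Rightarrow> 'm bgel) \<Rightarrow> 'm bgel set \<Rightarrow> bool" where
  "linmap sm f S \<longleftrightarrow> (\<forall>x\<in>S. \<forall>y\<in>S. f (x + y) = f x + f y)
     \<and> (\<forall>r. \<forall>x\<in>S. f (smv sm r x) = smv sm r (f x))"

text \<open>Short exact sequence 0 -> A -f-> B -g-> C -> 0 (z is the zero of C).\<close>
definition ses :: "'x set \<Rightarrow> 'y set \<Rightarrow> 'z set \<Rightarrow> 'z \<Rightarrow> ('x \<Rightarrow> 'y) \<Rightarrow> ('y \<Rightarrow> 'z) \<Rightarrow> bool" where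
  "ses A B C z f g \<longleftrightarrow> f ` A \<subseteq> B \<and> inj_on f A \<and> g ` B = C \<and> {b \<in> B. g b = z} = f ` A"

text \<open>Map S/T -> S'/T' induced by f (evaluated on a representative).\<close>
definition qmap :: "('a \<Rightarrow> 'b::plus) \<Rightarrow> 'b set \<Rightarrow> 'a set \<Rightarrow> 'b set" where
  "qmap f T X = coset (f (SOME x. x \<in> X)) T"

text \<open>A 3x3 commutative diagram
     0 -> T1 -> T2 -> T3 -> 0        (maps f, g restricted)
     0 -> M1 -> M2 -> M3 -> 0        (maps f, g)
     0 -> M1/T1 -> M2/T2 -> M3/T3 -> 0   (induced maps)
  with inclusions T_i -> M_i and quotient maps M_i -> M_i/T_i as columns,
  all rows and columns exact.\<close>
definition diagram ::
  "('r \<Rightarrow> 'm \<Rightarrow> 'm) \<Rightarrow> ('m::ab_group_add) bgel set \<Rightarrow> 'm bgel set \<Rightarrow> 'm bgel set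
   \<Rightarrow> 'm bgel set \<Rightarrow> 'm bgel set \<Rightarrow> 'm bgel set
   \<Rightarrow> ('m bgel \<Rightarrow> 'm bgel) \<Rightarrow> ('m bgel \<Rightarrow> 'm bgel) \<Rightarrow> bool" where
  "diagram sm T1 T2 T3 M1 M2 M3 f g \<longleftrightarrow>
     (\<forall>S\<in>{T1, T2, T3, M1, M2, M3}. is_submod sm S)
   \<and> T1 \<subseteq> M1 \<and> T2 \<subseteq> M2 \<and> T3 \<subseteq> M3
   \<and> linmap sm f M1 \<and> linmap sm g M2
   \<and> ses T1 T2 T3 0 f g
   \<and> ses M1 M2 M3 0 f g
   \<and> ses (quot M1 T1) (quot M2 T2) (quot M3 T3) T3 (qmap f T2) (qmap g T3)
   \<and> (\<forall>x\<in>M1. qmap f T2 (coset x T1) = coset (f x) T2)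
   \<and> (\<forall>y\<in>M2. qmap g T3 (coset y T2) = coset (g y) T3)
   \<and> ses T1 M1 (quot M1 T1) T1 id (\<lambda>x. coset x T1)
   \<and> ses T2 M2 (quot M2 T2) T2 id (\<lambda>x. coset x T2)
   \<and> ses T3 M3 (quot M3 T3) T3 id (\<lambda>x. coset x T3)"

end

theory Submission
  imports Defs
begin

text \<open>Every module in the three diagrams is a projection of \<open>B\<^sup>3 \<subseteq> Z\<^sup>3\<close> along the
  filtration \<open>G\<^sup>q\<close>, possibly cut down to a single bidegree:
  \<open>Z\<^sup>3(N\<^sub>0) = Z\<^sup>3 \<inter> C\<^bsup>3,0\<^esup>\<close>, \<open>ker \<rho>\<^sub>3 = \<pi>\<^sub>1 Z\<^sup>3\<close>, \<open>ker \<varrho>\<^sub>3 = \<pi>\<^sub>1 Z\<^sup>3 \<inter> C\<^bsup>2,1\<^esup>\<close>,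
  \<open>Zcal\<^bsup>3\<^esup>\<^sub>q = \<pi>\<^sub>q Z\<^sup>3\<close> and \<open>B\<^sup>3(C\<^bsup>0,\<bullet>\<^esup>) = \<pi>\<^sub>3 B\<^sup>3\<close>.  For submodules \<open>B \<subseteq> C\<close> of \<open>C\<^sup>k\<close>,
  the projection \<open>\<pi>\<^bsub>q+1\<^esub>\<close> maps \<open>\<pi>\<^sub>q C\<close> onto \<open>\<pi>\<^bsub>q+1\<^esub> C\<close> with kernel
  \<open>\<pi>\<^sub>q C \<inter> C\<^bsup>k-q,q\<^esup>\<close>, and likewise for \<open>B\<close>; the three diagrams are the cases
  \<open>q = 0, 1, 2\<close>, and exactness of their bottom rows is a diagram chase.\<close>

definition add_subgroup :: "'a::ab_group_add set \<Rightarrow> bool" where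
  "add_subgroup S \<longleftrightarrow> 0 \<in> S \<and> (\<forall>x\<in>S. \<forall>y\<in>S. x + y \<in> S) \<and> (\<forall>x\<in>S. - x \<in> S)"

lemma add_subgroup_diff: "add_subgroup S \<Longrightarrow> x \<in> S \<Longrightarrow> y \<in> S \<Longrightarrow> x - y \<in> S"
  unfolding add_subgroup_def by (metis diff_conv_add_uminus)

lemma submod_add_subgroup: "is_submod sm S \<Longrightarrow> add_subgroup S"
  by (simp add: is_submod_def add_subgroup_def)

lemma additive_diff:
  assumes "add_subgroup S" "\<forall>x\<in>S. \<forall>y\<in>S. f (x + y) = (f x + f y :: 'b::ab_group_add)"
    and "x \<in> S" "y \<in> S"
  shows "f (x - y) = f x - f y"
proof -
  have "x - y \<in> S" using assms add_subgroup_diff by blast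
  then have "f (x - y + y) = f (x - y) + f y" using assms by blast
  then show ?thesis by (simp add: algebra_simps)
qed

lemma additive_zero:
  assumes "add_subgroup S" "\<forall>x\<in>S. \<forall>y\<in>S. f (x + y) = (f x + f y :: 'b::ab_group_add)"
  shows "f 0 = 0"
  using additive_diff[OF assms, of 0 0] assms(1) by (simp add: add_subgroup_def)

lemma coset_eq_iff:
  assumes "add_subgroup T"
  shows "coset x T = coset y T \<longleftrightarrow> x - y \<in> T"
proof
  assume "coset x T = coset y T"
  moreover have "y \<in> coset y T" using assms by (force simp: coset_def add_subgroup_def)
  ultimately obtain t where "t \<in> T" "y = x + t" unfolding coset_def by auto
  then show "x - y \<in> T" using assms by (simp add: add_subgroup_def)
next
  assume xy: "x - y \<in> T"
  have "coset x T \<subseteq> coset y T" if "x - y \<in> T" for x y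
  proof
    fix z assume "z \<in> coset x T"
    then obtain t where t: "t \<in> T" "z = x + t" unfolding coset_def by auto
    then have "(x - y) + t \<in> T" using that assms by (simp add: add_subgroup_def)
    moreover have "z = y + ((x - y) + t)" using t by simp
    ultimately show "z \<in> coset y T" unfolding coset_def by blast
  qed
  moreover have "y - x \<in> T"
    using xy assms by (metis add_subgroup_def minus_diff_eq)
  ultimately show "coset x T = coset y T" using xy by blast
qed

lemma coset_zero: "coset (0::'a::monoid_add) T = T"
  by (simp add: coset_def)

lemma coset_eq_self_iff: "add_subgroup T \<Longrightarrow> coset x T = T \<longleftrightarrow> x \<in> T"
  using coset_eq_iff[of T x 0] by (simp add: coset_zero)

lemma qmap_coset:
  assumes "add_subgroup T" "add_subgroup T'"
    and "\<And>t. t \<in> T \<Longrightarrow> f (y + t) = f y + f t" "f ` T \<subseteq> T'"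
  shows "qmap f T' (coset y T) = coset (f y) T'"
proof -
  have "y \<in> coset y T" using assms(1) by (force simp: coset_def add_subgroup_def)
  then have "(SOME z. z \<in> coset y T) \<in> coset y T" by (rule someI)
  then obtain t where t: "t \<in> T" "(SOME z. z \<in> coset y T) = y + t" unfolding coset_def by auto
  then have "coset (f (y + t)) T' = coset (f y) T'"
    using assms by (simp add: coset_eq_iff image_subset_iff)
  then show ?thesis unfolding qmap_def t(2) .
qed

lemma qmap_id_coset:
  "add_subgroup T \<Longrightarrow> add_subgroup T' \<Longrightarrow> T \<subseteq> T' \<Longrightarrow> qmap id T' (coset x T) = coset x T'"
  using qmap_coset[of T T' id x] by auto

lemma ses_quotient_map:
  assumes "add_subgroup T" "T \<subseteq> M"
  shows "ses T M (quot M T) T id (\<lambda>x. coset x T)"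
  using assms coset_eq_self_iff[OF assms(1)] by (auto simp: ses_def quot_def)

lemma ses_quot_row:
  assumes sg: "add_subgroup T1" "add_subgroup T2" "add_subgroup T3"
    "add_subgroup M1" "add_subgroup M2"
    and inc: "T1 \<subseteq> M1" "T2 \<subseteq> M2" "M1 \<subseteq> M2"
    and add: "\<forall>x\<in>M2. \<forall>y\<in>M2. g (x + y) = g x + g y"
    and gM: "g ` M2 = M3" "{b\<in>M2. g b = 0} = M1"
    and gT: "g ` T2 = T3" "{b\<in>T2. g b = 0} = T1"
  shows "ses (quot M1 T1) (quot M2 T2) (quot M3 T3) T3 (qmap id T2) (qmap g T3)"
proof -
  have qid: "qmap id T2 (coset x T1) = coset x T2" for x
    using qmap_id_coset sg gT by blast
  have qg: "qmap g T3 (coset y T2) = coset (g y) T3" if "y \<in> M2" for y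
    by (rule qmap_coset) (use sg gT inc that add in auto)
  have inj: "inj_on (qmap id T2) (quot M1 T1)"
  proof (rule inj_onI)
    fix a b assume "a \<in> quot M1 T1" "b \<in> quot M1 T1" and ab: "qmap id T2 a = qmap id T2 b"
    then obtain x y where x: "x \<in> M1" "a = coset x T1" and y: "y \<in> M1" "b = coset y T1"
      unfolding quot_def by blast
    have "x - y \<in> T2" using ab x y qid coset_eq_iff[OF sg(2)] by simp
    moreover have "x - y \<in> M1" using add_subgroup_diff[OF sg(4)] x y by blast
    ultimately have "x - y \<in> T1" using gM(2) gT(2) by blast
    then show "a = b" using x y coset_eq_iff[OF sg(1)] by simp
  qed
  have onto: "qmap g T3 ` quot M2 T2 = quot M3 T3"
    using qg gM(1) by (auto simp: quot_def image_image image_def)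
  have ker_sub: "b \<in> qmap id T2 ` quot M1 T1"
    if y: "y \<in> M2" "b = coset y T2" "g y \<in> T3" for b y
  proof -
    obtain t where t: "t \<in> T2" "g t = g y" using y(3) gT(1) by auto
    have "g (y - t) = 0"
      using additive_diff[OF sg(5) add] y t inc by auto
    then have "y - t \<in> M1" using gM(2) add_subgroup_diff[OF sg(5)] y t inc by blast
    moreover have "coset (y - t) T2 = b"
      using coset_eq_iff[OF sg(2)] t y sg(2) by (simp add: add_subgroup_def)
    ultimately show ?thesis using qid unfolding quot_def by (metis image_eqI)
  qed
  have "{b \<in> quot M2 T2. qmap g T3 b = T3} = qmap id T2 ` quot M1 T1"
    using ker_sub qid qg inc gM(2) sg(3)
    by (auto simp: quot_def coset_eq_self_iff coset_zero)
  then show ?thesis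
    unfolding ses_def using inj onto qid inc by (auto simp: quot_def)
qed

lemma diagram_idI:
  assumes sub: "is_submod sm T1" "is_submod sm T2" "is_submod sm T3"
    "is_submod sm M1" "is_submod sm M2" "is_submod sm M3"
    and inc: "T1 \<subseteq> M1" "T2 \<subseteq> M2" "T3 \<subseteq> M3" "M1 \<subseteq> M2"
    and lin: "linmap sm g M2"
    and gM: "g ` M2 = M3" "{b\<in>M2. g b = 0} = M1"
    and gT: "g ` T2 = T3" "{b\<in>T2. g b = 0} = T1"
  shows "diagram sm T1 T2 T3 M1 M2 M3 id g"
proof -
  note sg = sub[THEN submod_add_subgroup]
  have add: "\<forall>x\<in>M2. \<forall>y\<in>M2. g (x + y) = g x + g y" using lin by (simp add: linmap_def)
  have "qmap id T2 (coset x T1) = coset x T2" for x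
    using qmap_id_coset sg gT by blast
  moreover have "qmap g T3 (coset y T2) = coset (g y) T3" if "y \<in> M2" for y
    by (rule qmap_coset) (use sg gT inc that add in auto)
  ultimately show ?thesis
    unfolding diagram_def
    using sub inc lin gM gT ses_quot_row[OF sg(1-5) inc(1,2,4) add gM gT]
      ses_quotient_map[OF sg(1) inc(1)] ses_quotient_map[OF sg(2) inc(2)]
      ses_quotient_map[OF sg(3) inc(3)]
    by (auto simp: ses_def linmap_def)
qed

lemma linmap_diff:
  assumes "is_submod sm S" "linmap sm f S" "x \<in> S" "y \<in> S"
  shows "f (x - y) = f x - f y"
  using assms additive_diff submod_add_subgroup unfolding linmap_def by blast

lemma linmap_zero:
  assumes "is_submod sm S" "linmap sm f S"
  shows "f 0 = 0"
  using assms additive_zero submod_add_subgroup unfolding linmap_def by blast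

lemma linmap_subset: "linmap sm f S \<Longrightarrow> T \<subseteq> S \<Longrightarrow> linmap sm f T"
  unfolding linmap_def by blast

lemma submod_image:
  assumes S: "is_submod sm S" and f: "linmap sm f S"
  shows "is_submod sm (f ` S)"
  unfolding is_submod_def
proof (intro conjI ballI allI)
  have "0 \<in> S" using S by (simp add: is_submod_def)
  then show "0 \<in> f ` S" using linmap_zero[OF S f] by (metis image_eqI)
next
  fix a b assume "a \<in> f ` S" "b \<in> f ` S"
  then obtain x y where xy: "x \<in> S" "y \<in> S" "a = f x" "b = f y" by blast
  then have "a + b = f (x + y)" "x + y \<in> S" using S f by (simp_all add: is_submod_def linmap_def)
  then show "a + b \<in> f ` S" by blast
next
  fix a assume "a \<in> f ` S"
  then obtain x where x: "x \<in> S" "a = f x" by blast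
  have "0 \<in> S" "- x \<in> S" using x S by (simp_all add: is_submod_def)
  moreover have "- a = f (- x)" using linmap_diff[OF S f \<open>0 \<in> S\<close> x(1)] linmap_zero[OF S f] x
    by simp
  ultimately show "- a \<in> f ` S" by blast
  fix r
  have "smv sm r a = f (smv sm r x)" "smv sm r x \<in> S" using x S f by (simp_all add: is_submod_def linmap_def)
  then show "smv sm r a \<in> f ` S" by blast
qed

lemma submod_Int: "is_submod sm A \<Longrightarrow> is_submod sm B \<Longrightarrow> is_submod sm (A \<inter> B)"
  by (simp add: is_submod_def)

lemma submod_kernel:
  assumes S: "is_submod sm S" and f: "linmap sm f S" and smv0: "\<And>r. smv sm r 0 = 0"
  shows "is_submod sm {x \<in> S. f x = 0}"
  using S f linmap_zero[OF S f] linmap_diff[OF S f, of 0] smv0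
  by (auto simp: is_submod_def linmap_def)

definition tot :: "('m::zero) bgcx \<Rightarrow> 'm bgel set" where
  "tot X = {\<eta>. \<forall>p q. \<eta> p q \<in> Cc X p q}"

lemma deg_eq: "deg X k = {\<eta> \<in> tot X. \<forall>p q. p + q \<noteq> k \<longrightarrow> \<eta> p q = 0}"
  by (simp add: deg_def tot_def)

lemma bideg_eq: "bideg X p q = {\<eta> \<in> tot X. \<forall>p' q'. (p', q') \<noteq> (p, q) \<longrightarrow> \<eta> p' q' = 0}"
  by (auto simp: bideg_def deg_eq)

lemma bideg_subset_deg: "p + q = k \<Longrightarrow> bideg X p q \<subseteq> deg X k"
  by (auto simp: bideg_def)

lemma proj_add: "proj q (a + b) = proj q a + proj q (b::'m::ab_group_add bgel)"
  and proj_diff: "proj q (a - b) = proj q a - proj q (b::'m::ab_group_add bgel)"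
  and proj_zero: "proj q (0::'m::ab_group_add bgel) = 0"
  by (auto simp: proj_def fun_eq_iff)

lemma proj_proj: "proj q (proj q' a) = proj (max q q') a"
  by (simp add: proj_def fun_eq_iff)

lemma proj_Suc_proj: "proj (Suc q) (proj q a) = proj (Suc q) a"
  by (simp add: proj_proj max_def)

lemma proj_0: "proj 0 = id"
  by (auto simp: proj_def fun_eq_iff)

lemma comp_diff: "comp (a - b) i j = comp a i j - comp (b::'m::ab_group_add bgel) i j"
  by (auto simp: comp_def fun_eq_iff)

lemma comp_comp: "comp (comp a i j) i' j' = (if (i, j) = (i', j') then comp a i j else 0)"
  by (auto simp: comp_def fun_eq_iff)

lemma comp_zero: "comp 0 i j = (0::'m::zero bgel)"
  by (simp add: comp_def fun_eq_iff)

lemma proj_comp: "proj q (comp x i j) = (if q \<le> j then comp x i j else 0)"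
  by (auto simp: proj_def comp_def fun_eq_iff)

lemma comp_bideg: "\<eta> \<in> bideg X p q \<Longrightarrow> comp \<eta> p q = \<eta>"
  by (auto simp: bideg_eq comp_def fun_eq_iff)

locale bicomplex =
  fixes sm :: "'r::ring_1 \<Rightarrow> 'm::ab_group_add \<Rightarrow> 'm" and X :: "'m bgcx"
  assumes bigraded_complex: "bigraded_complex sm X"
begin

lemmas bigraded_complex_unfolded = bigraded_complex[unfolded bigraded_complex_def]

lemma Cc_zero: "0 \<in> Cc X p q"
  and Cc_add: "x \<in> Cc X p q \<Longrightarrow> y \<in> Cc X p q \<Longrightarrow> x + y \<in> Cc X p q"
  and Cc_uminus: "x \<in> Cc X p q \<Longrightarrow> - x \<in> Cc X p q"
  and Cc_sm: "x \<in> Cc X p q \<Longrightarrow> sm r x \<in> Cc X p q"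
  and sm_add: "x \<in> Cc X p q \<Longrightarrow> y \<in> Cc X p q \<Longrightarrow> sm r (x + y) = sm r x + sm r y"
  using bigraded_complex_unfolded[THEN conjunct1] by blast+

lemma d21_in: "x \<in> Cc X p (Suc q) \<Longrightarrow> d21 X p (Suc q) x \<in> Cc X (p + 2) q"
  and d21_add: "x \<in> Cc X p (Suc q) \<Longrightarrow> y \<in> Cc X p (Suc q) \<Longrightarrow>
      d21 X p (Suc q) (x + y) = d21 X p (Suc q) x + d21 X p (Suc q) y"
  and d21_sm: "x \<in> Cc X p (Suc q) \<Longrightarrow> d21 X p (Suc q) (sm r x) = sm r (d21 X p (Suc q) x)"
  using bigraded_complex_unfolded[THEN conjunct2, THEN conjunct1] by blast+

lemma d10_in: "x \<in> Cc X p q \<Longrightarrow> d10 X p q x \<in> Cc X (p + 1) q"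
  and d10_add: "x \<in> Cc X p q \<Longrightarrow> y \<in> Cc X p q \<Longrightarrow> d10 X p q (x + y) = d10 X p q x + d10 X p q y"
  and d10_sm: "x \<in> Cc X p q \<Longrightarrow> d10 X p q (sm r x) = sm r (d10 X p q x)"
  using bigraded_complex_unfolded[THEN conjunct2, THEN conjunct2, THEN conjunct1] by blast+

lemma d01_in: "x \<in> Cc X p q \<Longrightarrow> d01 X p q x \<in> Cc X p (q + 1)"
  and d01_add: "x \<in> Cc X p q \<Longrightarrow> y \<in> Cc X p q \<Longrightarrow> d01 X p q (x + y) = d01 X p q x + d01 X p q y"
  and d01_sm: "x \<in> Cc X p q \<Longrightarrow> d01 X p q (sm r x) = sm r (d01 X p q x)"
  using bigraded_complex_unfolded[THEN conjunct2, THEN conjunct2, THEN conjunct2, THEN conjunct1]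
  by blast+

lemma dd_dd: "\<eta> \<in> deg X k \<Longrightarrow> dd X (dd X \<eta>) = 0"
  using bigraded_complex_unfolded by blast

lemma Cc_subgroup: "add_subgroup (Cc X p q)"
  by (simp add: add_subgroup_def Cc_zero Cc_add Cc_uminus)

lemma sm_zero: "sm r 0 = 0"
  using additive_zero[OF Cc_subgroup] sm_add by blast

lemma d21_zero: "d21 X p (Suc q) 0 = 0"
  using additive_zero[OF Cc_subgroup] d21_add by blast

lemma d10_zero: "d10 X p q 0 = 0"
  using additive_zero[OF Cc_subgroup] d10_add by blast

lemma d01_zero: "d01 X p q 0 = 0"
  using additive_zero[OF Cc_subgroup] d01_add by blast

lemma smv_zero: "smv sm r 0 = 0"
  by (auto simp: smv_def sm_zero fun_eq_iff)

lemma submod_vanishing: "is_submod sm {\<eta> \<in> tot X. \<forall>p q. P p q \<longrightarrow> \<eta> p q = 0}"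
  by (auto simp: is_submod_def tot_def smv_def Cc_zero Cc_add Cc_uminus Cc_sm sm_zero)

lemma submod_tot: "is_submod sm (tot X)"
  using submod_vanishing[of "\<lambda>_ _. False"] by simp

lemma submod_deg: "is_submod sm (deg X k)"
  unfolding deg_eq by (rule submod_vanishing)

lemma submod_bideg: "is_submod sm (bideg X p q)"
  unfolding bideg_eq by (rule submod_vanishing)

lemma D21_tot:
  assumes "\<eta> \<in> tot X" shows "D21 X \<eta> \<in> tot X"
proof -
  have "d21 X (p - 2) (Suc q) (\<eta> (p - 2) (Suc q)) \<in> Cc X p q" if "2 \<le> p" for p q
    using d21_in[of "\<eta> (p - 2) (Suc q)" "p - 2" q] assms that
    by (simp add: tot_def del: add_2_eq_Suc')
  then show ?thesis by (simp add: tot_def D21_def Cc_zero)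
qed

lemma D10_tot:
  assumes "\<eta> \<in> tot X" shows "D10 X \<eta> \<in> tot X"
proof -
  have "d10 X (p - 1) q (\<eta> (p - 1) q) \<in> Cc X p q" if "1 \<le> p" for p q
    using d10_in[of "\<eta> (p - 1) q" "p - 1" q] assms that by (simp add: tot_def)
  then show ?thesis by (simp add: tot_def D10_def Cc_zero)
qed

lemma D01_tot:
  assumes "\<eta> \<in> tot X" shows "D01 X \<eta> \<in> tot X"
proof -
  have "d01 X p (q - 1) (\<eta> p (q - 1)) \<in> Cc X p q" if "1 \<le> q" for p q
    using d01_in[of "\<eta> p (q - 1)" p "q - 1"] assms that by (simp add: tot_def)
  then show ?thesis by (simp add: tot_def D01_def Cc_zero)
qed

lemma dd_tot: "\<eta> \<in> tot X \<Longrightarrow> dd X \<eta> \<in> tot X"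
  using submod_tot D21_tot D10_tot D01_tot by (simp add: dd_def is_submod_def)

lemma linmap_D21: "linmap sm (D21 X) (tot X)"
  by (simp add: linmap_def tot_def D21_def smv_def fun_eq_iff d21_add d21_sm sm_zero)

lemma linmap_D10: "linmap sm (D10 X) (tot X)"
  by (simp add: linmap_def tot_def D10_def smv_def fun_eq_iff d10_add d10_sm sm_zero)

lemma linmap_D01: "linmap sm (D01 X) (tot X)"
  by (simp add: linmap_def tot_def D01_def smv_def fun_eq_iff d01_add d01_sm sm_zero)

lemma smv_add:
  assumes "a \<in> tot X" "b \<in> tot X"
  shows "smv sm r (a + b) = smv sm r a + smv sm r b"
proof (rule ext, rule ext)
  fix p q
  have "a p q \<in> Cc X p q" "b p q \<in> Cc X p q" using assms by (auto simp: tot_def)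
  from sm_add[OF this] show "smv sm r (a + b) p q = (smv sm r a + smv sm r b) p q"
    by (simp add: smv_def)
qed

lemma linmap_dd: "linmap sm (dd X) (tot X)"
  using linmap_D21 linmap_D10 linmap_D01 D21_tot D10_tot D01_tot submod_tot
  by (simp add: linmap_def dd_def smv_add is_submod_def algebra_simps)

lemma linmap_proj: "linmap sm (proj q) S"
  by (simp add: linmap_def proj_add proj_def smv_def fun_eq_iff sm_zero)

lemma deg_subset_tot: "deg X k \<subseteq> tot X"
  by (auto simp: deg_eq)

lemma bideg_subset_tot: "bideg X p q \<subseteq> tot X"
  by (auto simp: bideg_eq)

lemma dd_deg:
  assumes "\<eta> \<in> deg X k" shows "dd X \<eta> \<in> deg X (Suc k)"
proof -
  have "\<eta> p q = 0" if "p + q \<noteq> k" for p q using assms that by (simp add: deg_eq)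
  then have "dd X \<eta> p q = 0" if "p + q \<noteq> Suc k" for p q
    using that by (simp add: dd_def D21_def D10_def D01_def d21_zero d10_zero d01_zero)
  then show ?thesis using dd_tot assms deg_subset_tot by (auto simp: deg_eq)
qed

lemma submod_cocycles: "is_submod sm (cocycles X k)"
  unfolding cocycles_def
  by (rule submod_kernel[OF submod_deg linmap_subset[OF linmap_dd deg_subset_tot] smv_zero])

lemma cocycles_subset_deg: "cocycles X k \<subseteq> deg X k"
  by (simp add: cocycles_def)

lemma coboundaries_Suc: "coboundaries X (Suc j) = dd X ` deg X j"
  by (auto simp: coboundaries_def)

lemma submod_coboundaries: "is_submod sm (coboundaries X (Suc j))"
  unfolding coboundaries_Suc
  by (rule submod_image[OF submod_deg linmap_subset[OF linmap_dd deg_subset_tot]])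

lemma coboundaries_subset_cocycles: "coboundaries X k \<subseteq> cocycles X k"
  by (auto simp: coboundaries_def cocycles_def dd_deg dd_dd)

lemma proj_deg: "a \<in> deg X k \<Longrightarrow> proj q a \<in> deg X k"
  by (simp add: deg_eq tot_def proj_def Cc_zero)

lemma proj_bideg: "a \<in> bideg X p q \<Longrightarrow> proj q' a = (if q' \<le> q then a else 0)"
  by (auto simp: bideg_eq proj_def fun_eq_iff)

lemma proj_in_bideg_iff:
  assumes "a \<in> deg X k"
  shows "proj q a \<in> bideg X (k - q) q \<longleftrightarrow> proj (Suc q) a = 0"
proof
  assume "proj q a \<in> bideg X (k - q) q"
  then have "proj (Suc q) (proj q a) = 0" by (simp add: proj_bideg)
  then show "proj (Suc q) a = 0" by (simp add: proj_Suc_proj)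
next
  assume a: "proj (Suc q) a = 0"
  have above: "a p' q' = 0" if "q < q'" for p' q'
    using that fun_cong[OF fun_cong[OF a], of p' q'] by (simp add: proj_def)
  have off: "a p' q = 0" if "p' \<noteq> k - q" for p'
  proof -
    have "p' + q \<noteq> k" using that by arith
    then show ?thesis using assms by (simp add: deg_eq)
  qed
  show "proj q a \<in> bideg X (k - q) q"
    unfolding bideg_eq
  proof (intro CollectI conjI allI impI)
    show "proj q a \<in> tot X" using assms proj_deg deg_subset_tot by blast
    fix p' q' assume "(p', q') \<noteq> (k - q, q)"
    then consider "q' < q" | "q < q'" | "q' = q" "p' \<noteq> k - q" by fastforce
    then show "proj q a p' q' = 0" using above off by cases (simp_all add: proj_def)
  qed
qed

lemma kernel_proj_Suc:
  assumes "S \<subseteq> deg X k"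
  shows "{b \<in> proj q ` S. proj (Suc q) b = 0} = proj q ` S \<inter> bideg X (k - q) q"
  using assms proj_in_bideg_iff by (auto simp: proj_Suc_proj)

lemma filtration_diagram:
  assumes B: "is_submod sm B" and C: "is_submod sm C" and "B \<subseteq> C" "C \<subseteq> deg X k"
  shows "diagram sm (proj q ` B \<inter> bideg X (k - q) q) (proj q ` B) (proj (Suc q) ` B)
    (proj q ` C \<inter> bideg X (k - q) q) (proj q ` C) (proj (Suc q) ` C) id (proj (Suc q))"
proof (rule diagram_idI)
  show "is_submod sm (proj q ` B \<inter> bideg X (k - q) q)" "is_submod sm (proj q ` B)"
    "is_submod sm (proj (Suc q) ` B)" "is_submod sm (proj q ` C \<inter> bideg X (k - q) q)"
    "is_submod sm (proj q ` C)" "is_submod sm (proj (Suc q) ` C)"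
    using submod_Int submod_image[OF _ linmap_proj] submod_bideg B C by blast+
  show "proj (Suc q) ` proj q ` C = proj (Suc q) ` C" "proj (Suc q) ` proj q ` B = proj (Suc q) ` B"
    by (simp_all add: image_image proj_Suc_proj)
  show "{b \<in> proj q ` C. proj (Suc q) b = 0} = proj q ` C \<inter> bideg X (k - q) q"
    "{b \<in> proj q ` B. proj (Suc q) b = 0} = proj q ` B \<inter> bideg X (k - q) q"
    using kernel_proj_Suc assms by blast+
qed (use assms linmap_proj in auto)

lemma comp_in_bideg: "\<eta> \<in> tot X \<Longrightarrow> comp \<eta> p q \<in> bideg X p q"
  by (auto simp: bideg_eq comp_def tot_def Cc_zero)

lemma D21_bideg_0: "\<eta> \<in> bideg X p 0 \<Longrightarrow> D21 X \<eta> = 0"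
  by (auto simp: bideg_eq D21_def fun_eq_iff d21_zero)

lemma D01_bideg:
  assumes "\<eta> \<in> bideg X p q" shows "D01 X \<eta> = comp (dd X \<eta>) p (Suc q)"
proof (rule ext, rule ext)
  fix p' q'
  have z: "\<eta> p'' q'' = 0" if "(p'', q'') \<noteq> (p, q)" for p'' q''
    using assms that by (simp add: bideg_eq)
  show "D01 X \<eta> p' q' = comp (dd X \<eta>) p (Suc q) p' q'"
  proof (cases "(p', q') = (p, Suc q)")
    case True
    have "D21 X \<eta> p (Suc q) = 0" using z[of "p - 2" "Suc (Suc q)"] by (simp add: D21_def d21_zero)
    moreover have "D10 X \<eta> p (Suc q) = 0" using z[of "p - 1" "Suc q"] by (simp add: D10_def d10_zero)
    ultimately show ?thesis using True by (simp add: comp_def dd_def)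
  next
    case False
    then have "D01 X \<eta> p' q' = 0"
      using z[of p' "q' - 1"] by (cases q') (simp_all add: D01_def d01_zero)
    then show ?thesis using False by (auto simp: comp_def)
  qed
qed

lemma Nbi_of_proj1:
  assumes "\<delta> \<in> deg X k" "proj 1 \<delta> = 0" "proj 1 (dd X \<delta>) = 0"
  shows "\<delta> \<in> Nbi X k 0"
proof -
  have "\<delta> \<in> bideg X k 0" using proj_in_bideg_iff[OF assms(1), of 0] assms(2) by (simp add: proj_0)
  moreover have "dd X \<delta> k 1 = 0"
    using fun_cong[OF fun_cong[OF assms(3)], of k 1] by (simp add: proj_def)
  ultimately show ?thesis using D01_bideg D21_bideg_0 by (auto simp: Nbi_def comp_def fun_eq_iff)
qed

lemma ZN_0_eq: "ZN X 0 k = cocycles X k \<inter> bideg X k 0"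
proof
  show "ZN X 0 k \<subseteq> cocycles X k \<inter> bideg X k 0"
    using bideg_subset_deg[of k 0 k] by (auto simp: ZN_def Ndeg_def Nbi_def cocycles_def)
  show "cocycles X k \<inter> bideg X k 0 \<subseteq> ZN X 0 k"
    using Nbi_of_proj1 proj_bideg by (auto simp: ZN_def Ndeg_def cocycles_def proj_zero)
qed

lemma submod_Nbi: "is_submod sm (Nbi X p q)"
proof -
  have "Nbi X p q = {x \<in> {x \<in> bideg X p q. D01 X x = 0}. D21 X x = 0}"
    by (auto simp: Nbi_def)
  also have "is_submod sm \<dots>"
    using bideg_subset_tot
    by (intro submod_kernel submod_bideg smv_zero linmap_subset[OF linmap_D21]
        linmap_subset[OF linmap_D01]) blast+
  finally show ?thesis .
qed

lemma submod_Ndeg: "is_submod sm (Ndeg X q k)"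
proof (cases "q \<le> k")
  case True
  then show ?thesis using submod_Nbi by (simp add: Ndeg_def)
next
  case False
  then show ?thesis by (simp add: Ndeg_def is_submod_def smv_zero)
qed

lemma Ndeg_subset_deg: "Ndeg X q k \<subseteq> deg X k"
proof (cases "q \<le> k")
  case True
  then have "bideg X (k - q) q \<subseteq> deg X k" by (intro bideg_subset_deg) simp
  then show ?thesis using True by (auto simp: Ndeg_def Nbi_def)
next
  case False
  then show ?thesis using submod_deg by (simp add: Ndeg_def is_submod_def)
qed

lemma proj_Suc_Ndeg: "\<alpha> \<in> Ndeg X q k \<Longrightarrow> proj (Suc q) \<alpha> = 0"
  by (auto simp: Ndeg_def Nbi_def proj_bideg proj_zero split: if_splits)

lemma BN_Suc: "BN X j (Suc k) = dd X ` Ndeg X j k"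
  by (auto simp: BN_def)

lemma submod_BN: "is_submod sm (BN X j (Suc k))"
  unfolding BN_Suc
  using submod_image[OF submod_Ndeg linmap_subset[OF linmap_dd]] Ndeg_subset_deg deg_subset_tot
  by blast

text \<open>For a lift \<open>\<eta>\<close> of \<open>\<xi>\<close>, \<open>\<partial>\<eta>\<close> is concentrated in bidegree \<open>(k+1,0)\<close>, where it is
  the representative of \<open>\<rho>\<^sub>k \<xi>\<close>.\<close>

lemma dd_lift_eq:
  assumes "\<eta> \<in> deg X k" "proj 1 (dd X \<eta>) = 0"
  shows "D21 X (comp (proj 1 \<eta>) (k - 1) 1) + D10 X (comp \<eta> k 0) = dd X \<eta>"
proof (rule ext, rule ext)
  fix p q
  have \<eta>0: "\<eta> p' q' = 0" if "p' + q' \<noteq> k" for p' q' using assms(1) that by (simp add: deg_eq)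
  have dd0: "dd X \<eta> p q = 0" if "(p, q) \<noteq> (Suc k, 0)"
  proof (cases q)
    case 0
    then show ?thesis using dd_deg[OF assms(1)] that by (simp add: deg_eq)
  next
    case (Suc q')
    then show ?thesis using fun_cong[OF fun_cong[OF assms(2)], of p q] by (simp add: proj_def)
  qed
  show "(D21 X (comp (proj 1 \<eta>) (k - 1) 1) + D10 X (comp \<eta> k 0)) p q = dd X \<eta> p q"
  proof (cases "(p, q) = (Suc k, 0)")
    case True
    then show ?thesis using \<eta>0[of 0 1]
      by (cases k) (simp_all add: dd_def D21_def D10_def D01_def comp_def proj_def d21_zero)
  next
    case False
    then show ?thesis using dd0 \<eta>0[of 0 1]
      by (auto simp: D21_def D10_def comp_def proj_def d21_zero d10_zero)
  qed
qed

lemma rho_rep_lift: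
  assumes "\<xi> \<in> Aset X k"
  obtains \<eta> where "\<eta> \<in> deg X k" "proj 1 \<eta> = \<xi>" "proj 1 (dd X \<eta>) = 0"
    "rho_rep X k \<xi> = dd X \<eta>"
proof -
  let ?lift = "\<lambda>\<eta>. \<eta> \<in> deg X k \<and> proj 1 \<eta> = \<xi> \<and> proj 1 (dd X \<eta>) = 0"
  define \<eta> where "\<eta> = (SOME \<eta>. ?lift \<eta>)"
  obtain \<eta>0 where "?lift \<eta>0" using assms unfolding Aset_def by blast
  then have \<eta>: "?lift \<eta>" unfolding \<eta>_def by (rule someI[of ?lift])
  have "rho_rep X k \<xi> = D21 X (comp \<xi> (k - 1) 1) + D10 X (comp \<eta> k 0)"
    unfolding rho_rep_def Let_def \<eta>_def ..
  also have "\<dots> = dd X \<eta>" using dd_lift_eq[of \<eta> k] \<eta> by simp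
  finally show ?thesis using that \<eta> by blast
qed

lemma BN_0_Suc: "BN X 0 (Suc k) = dd X ` Nbi X k 0"
  by (simp add: BN_Suc Ndeg_def)

lemma ker_rho_eq: "ker_rho X k = proj 1 ` cocycles X k"
proof
  have BN: "add_subgroup (BN X 0 (Suc k))" using submod_BN submod_add_subgroup by blast
  have diff_deg: "a - b \<in> deg X k" if "a \<in> deg X k" "b \<in> deg X k" for a b
    using that by (rule add_subgroup_diff[OF submod_add_subgroup[OF submod_deg]])
  have dd_diff: "dd X (a - b) = dd X a - dd X b" if "a \<in> deg X k" "b \<in> deg X k" for a b
    using that deg_subset_tot by (intro linmap_diff[OF submod_tot linmap_dd]) auto
  show "ker_rho X k \<subseteq> proj 1 ` cocycles X k"
  proof
    fix \<xi> assume "\<xi> \<in> ker_rho X k"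
    then have A: "\<xi> \<in> Aset X k" and \<rho>: "rho X k \<xi> = BN X 0 (Suc k)"
      by (simp_all add: ker_rho_def)
    obtain \<eta> where \<eta>: "\<eta> \<in> deg X k" "proj 1 \<eta> = \<xi>" "proj 1 (dd X \<eta>) = 0"
      "rho_rep X k \<xi> = dd X \<eta>"
      by (rule rho_rep_lift[OF A])
    have "dd X \<eta> \<in> BN X 0 (Suc k)" using \<rho> \<eta>(4) coset_eq_self_iff[OF BN] by (simp add: rho_def)
    then obtain \<zeta> where \<zeta>: "\<zeta> \<in> Nbi X k 0" "dd X \<eta> = dd X \<zeta>"
      unfolding BN_0_Suc by (rule imageE)
    then have "\<zeta> \<in> bideg X k 0" by (simp add: Nbi_def)
    then have "\<zeta> \<in> deg X k" "proj 1 \<zeta> = 0" using bideg_subset_deg[of k 0 k] proj_bideg by auto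
    then have "\<eta> - \<zeta> \<in> cocycles X k" "proj 1 (\<eta> - \<zeta>) = \<xi>"
      using \<eta> \<zeta> diff_deg dd_diff by (simp_all add: cocycles_def proj_diff)
    then show "\<xi> \<in> proj 1 ` cocycles X k" by blast
  qed
  show "proj 1 ` cocycles X k \<subseteq> ker_rho X k"
  proof
    fix \<xi> assume "\<xi> \<in> proj 1 ` cocycles X k"
    then obtain c where c: "c \<in> deg X k" "dd X c = 0" "\<xi> = proj 1 c" by (auto simp: cocycles_def)
    then have A: "\<xi> \<in> Aset X k" by (auto simp: Aset_def proj_zero)
    then obtain \<eta> where \<eta>: "\<eta> \<in> deg X k" "proj 1 \<eta> = \<xi>" "proj 1 (dd X \<eta>) = 0"
      "rho_rep X k \<xi> = dd X \<eta>"
      by (rule rho_rep_lift)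
    have "\<eta> - c \<in> Nbi X k 0"
      using \<eta> c diff_deg dd_diff by (intro Nbi_of_proj1) (simp_all add: proj_diff)
    then have "dd X (\<eta> - c) \<in> BN X 0 (Suc k)" unfolding BN_0_Suc by blast
    then have "rho_rep X k \<xi> \<in> BN X 0 (Suc k)" using \<eta> c dd_diff by simp
    then show "\<xi> \<in> ker_rho X k" using A coset_eq_self_iff[OF BN] by (simp add: ker_rho_def rho_def)
  qed
qed

lemma ker_varrho_eq: "ker_varrho X k = ker_rho X k \<inter> bideg X (k - 1) 1"
  by (auto simp: ker_varrho_def ker_rho_def Jset_def)

lemma proj_split:
  assumes "x \<in> deg X n"
  shows "proj q x = comp x (n - q) q + proj (Suc q) x"
proof (rule ext, rule ext)
  fix p' q'
  have "x p' q = 0" if "p' \<noteq> n - q"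
  proof -
    have "p' + q \<noteq> n" using that by arith
    then show ?thesis using assms by (simp add: deg_eq)
  qed
  then show "proj q x p' q' = (comp x (n - q) q + proj (Suc q) x) p' q'"
    by (cases q' q rule: linorder_cases) (auto simp: proj_def comp_def)
qed

lemma comp_dd_Mset:
  assumes "\<eta> \<in> Mset X k"
  shows "comp (dd X \<eta>) (Suc k - q) q \<in> BN X q (Suc k)"
proof (cases "q \<le> Suc k")
  case True
  then show ?thesis using assms by (simp add: Mset_def)
next
  case False
  have "dd X \<eta> \<in> deg X (Suc k)" using assms dd_deg by (simp add: Mset_def)
  then have "comp (dd X \<eta>) (Suc k - q) q = 0" using False by (auto simp: deg_eq comp_def fun_eq_iff)
  then show ?thesis using submod_BN by (simp add: is_submod_def)
qed

text \<open>The components of \<open>\<partial>\<eta>\<close> below filtration degree \<open>q\<close> are coboundaries in the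
  \<open>N\<^sub>j\<close>; subtracting their primitives one row at a time turns \<open>\<eta>\<close> into a cocycle
  without changing \<open>\<pi>\<^sub>q \<eta>\<close>.\<close>

lemma Mset_lift_cocycle:
  assumes "\<eta> \<in> Mset X k" "proj q (dd X \<eta>) = 0"
  shows "\<exists>c\<in>cocycles X k. proj q c = proj q \<eta>"
  using assms
proof (induction q arbitrary: \<eta>)
  case 0
  then have "\<eta> \<in> cocycles X k" by (simp add: Mset_def cocycles_def proj_0 fun_eq_iff)
  then show ?case by blast
next
  case (Suc q)
  obtain \<alpha> where \<alpha>: "comp (dd X \<eta>) (Suc k - q) q = dd X \<alpha>" "\<alpha> \<in> Ndeg X q k"
    using comp_dd_Mset[OF Suc.prems(1), of q] unfolding BN_Suc by (rule imageE)
  have \<eta>: "\<eta> \<in> deg X k" and \<alpha>_deg: "\<alpha> \<in> deg X k"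
    using Suc.prems(1) \<alpha>(2) Ndeg_subset_deg by (auto simp: Mset_def)
  have deg': "\<eta> - \<alpha> \<in> deg X k"
    using \<eta> \<alpha>_deg by (rule add_subgroup_diff[OF submod_add_subgroup[OF submod_deg]])
  have dd': "dd X (\<eta> - \<alpha>) = dd X \<eta> - comp (dd X \<eta>) (Suc k - q) q"
    using linmap_diff[OF submod_tot linmap_dd, of \<eta> \<alpha>] \<eta> \<alpha>_deg \<alpha>(1)
    by (simp add: subsetD[OF deg_subset_tot])
  have "0 \<in> BN X j (Suc k)" for j using submod_BN by (simp add: is_submod_def)
  then have "\<eta> - \<alpha> \<in> Mset X k"
    using Suc.prems(1) deg' by (auto simp: Mset_def dd' comp_diff comp_comp)
  moreover have "proj q (dd X (\<eta> - \<alpha>)) = 0"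
  proof -
    have "proj q (dd X (\<eta> - \<alpha>)) = proj q (dd X \<eta>) - comp (dd X \<eta>) (Suc k - q) q"
      by (simp add: dd' proj_diff proj_comp)
    also have "\<dots> = proj (Suc q) (dd X \<eta>)"
      using proj_split[OF dd_deg[OF \<eta>], of q] by simp
    also have "\<dots> = 0" by (rule Suc.prems(2))
    finally show ?thesis .
  qed
  ultimately obtain c where "c \<in> cocycles X k" "proj q c = proj q (\<eta> - \<alpha>)" using Suc.IH by blast
  moreover have "proj (Suc q) \<alpha> = 0" using \<alpha>(2) proj_Suc_Ndeg by blast
  ultimately show ?case by (metis proj_Suc_proj proj_diff diff_zero)
qed

lemma Zcal_eq: "Zcal X k q = proj q ` cocycles X k"
proof
  show "Zcal X k q \<subseteq> proj q ` cocycles X k"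
  proof
    fix z assume "z \<in> Zcal X k q"
    then obtain \<eta> where \<eta>: "\<eta> \<in> Mset X k" "proj q (dd X \<eta>) = 0" "z = proj q \<eta>"
      by (auto simp: Zcal_def)
    then obtain c where "c \<in> cocycles X k" "proj q c = z" using Mset_lift_cocycle by metis
    then show "z \<in> proj q ` cocycles X k" by blast
  qed
  have "c \<in> Mset X k" if "c \<in> cocycles X k" for c
    using that submod_BN by (simp add: Mset_def cocycles_def comp_zero is_submod_def)
  then show "proj q ` cocycles X k \<subseteq> Zcal X k q"
    by (auto simp: Zcal_def cocycles_def proj_zero)
qed

lemma proj_Suc_dd:
  assumes "\<zeta> \<in> deg X j"
  shows "proj (Suc j) (dd X \<zeta>) = D01 X (comp \<zeta> 0 j)"
proof (rule ext, rule ext)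
  fix p q
  have z: "\<zeta> p' q' = 0" if "p' + q' \<noteq> j" for p' q' using assms that by (simp add: deg_eq)
  show "proj (Suc j) (dd X \<zeta>) p q = D01 X (comp \<zeta> 0 j) p q"
  proof (cases "Suc j \<le> q")
    case True
    then show ?thesis using z[of "p - 2" "Suc q"] z[of "p - 1" q] z[of p "q - 1"]
      by (auto simp: proj_def dd_def D21_def D10_def D01_def comp_def d21_zero d10_zero)
  next
    case False
    then show ?thesis by (auto simp: proj_def D01_def comp_def d01_zero)
  qed
qed

lemma B0col_eq: "B0col X (Suc j) = proj (Suc j) ` coboundaries X (Suc j)"
proof
  show "B0col X (Suc j) \<subseteq> proj (Suc j) ` coboundaries X (Suc j)"
  proof
    fix x assume "x \<in> B0col X (Suc j)"
    then obtain \<eta> where \<eta>: "\<eta> \<in> bideg X 0 j" "x = D01 X \<eta>" by (auto simp: B0col_def)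
    then have "\<eta> \<in> deg X j" using bideg_subset_deg[of 0 j j] by auto
    moreover have "proj (Suc j) (dd X \<eta>) = x" using proj_Suc_dd[OF calculation] comp_bideg[OF \<eta>(1)] \<eta>(2) by simp
    ultimately show "x \<in> proj (Suc j) ` coboundaries X (Suc j)" unfolding coboundaries_Suc by blast
  qed
  show "proj (Suc j) ` coboundaries X (Suc j) \<subseteq> B0col X (Suc j)"
    using proj_Suc_dd comp_in_bideg deg_subset_tot
    by (fastforce simp: coboundaries_Suc B0col_def)
qed

end

theorem theorem5p7:
  fixes sm :: "'r::ring_1 \<Rightarrow> 'm::ab_group_add \<Rightarrow> 'm" and X :: "'m bgcx"
  assumes "bigraded_complex sm X"
  shows "diagram sm (coboundaries X 3 \<inter> bideg X 3 0) (coboundaries X 3) (Bcal X 3 1)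
                    (ZN X 0 3) (cocycles X 3) (ker_rho X 3) id (proj 1)
       \<and> diagram sm (Bcal X 3 1 \<inter> bideg X 2 1) (Bcal X 3 1) (Bcal X 3 2)
                    (ker_varrho X 3) (ker_rho X 3) (Zcal X 3 2) id (proj 2)
       \<and> diagram sm (Bcal X 3 2 \<inter> bideg X 1 2) (Bcal X 3 2) (B0col X 3)
                    (Zcal X 3 2 \<inter> bideg X 1 2) (Zcal X 3 2) (Zcal X 3 3) id (proj 3)"
proof -
  interpret bicomplex sm X by (rule bicomplex.intro) (fact assms)
  have "is_submod sm (coboundaries X 3)"
    using submod_coboundaries[of 2] by (simp add: numeral_3_eq_3)
  note diagram = filtration_diagram[OF this submod_cocycles coboundaries_subset_cocycles
      cocycles_subset_deg]
  have "B0col X 3 = proj 3 ` coboundaries X 3"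
    using B0col_eq[of 2] by (simp add: numeral_3_eq_3)
  with diagram[of 0] diagram[of 1] diagram[of 2] show ?thesis
    by (simp add: Bcal_def ZN_0_eq ker_varrho_eq ker_rho_eq Zcal_eq proj_0 numeral_eq_Suc)
qed

end
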